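(* Let $\mathcal C$ be a normal category, let $X \xrightarrow{k} A \xleftarrow{s} B$ be an extremally epic cospan in $\mathcal C$, and let $f\colon X\to Y$, $g\colon B\to Y$. Then $f$ and $g$ commute relatively to $(k,s)$ if and only if the $(k,s)$-commutator $[f,g]_{k,s}$ is the zero subobject of $Y$.
   Context: A normal category is a pointed regular category in which every regular epimorphism is a normal epimorphism. Given a cospan $X \xrightarrow{k} A \xleftarrow{s} B$, morphisms $f\colon X\to Y$ and $g\colon B\to Y$ commute relatively to $(k,s)$ if there exists $\varphi\colon A\to Y$ with $\varphi\circ k=f$ and $\varphi\circ s=g$. The cospan is extremally epic if whenever $k=m\circ k'$ and $s=m\circ s'$ for some monomorphism $m\colon M\to A$, $m$ is an isomorphism. For such a cospan, let $\langle k,s\rangle\colon X+B\to A$ be the induced morphism and $\kappa_{k,s}\colon X\diamond_{k,s}B\to X+B$ its kernel; the $(k,s)$-commutator $[f,g]_{k,s}\leq Y$ is the image of $\langle f,g\rangle\circ\kappa_{k,s}$. *)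

theory Defs
  imports Main
begin

text \<open>Elementary (one-sorted-arrow) categories, given by object set, arrow set,
  domain, codomain, identities and composition.  comp C g f is g after f.\<close>

record ('o, 'm) category =
  Obj :: "'o set"
  Arr :: "'m set"
  cdom :: "'m \<Rightarrow> 'o"
  ccod :: "'m \<Rightarrow> 'o"
  cid :: "'o \<Rightarrow> 'm"
  comp :: "'m \<Rightarrow> 'm \<Rightarrow> 'm"

definition hom :: "('o, 'm, 'x) category_scheme \<Rightarrow> 'o \<Rightarrow> 'o \<Rightarrow> 'm set" where
  "hom C a b = {f \<in> Arr C. cdom C f = a \<and> ccod C f = b}"

definition category :: "('o, 'm, 'x) category_scheme \<Rightarrow> bool" where
  "category C \<longleftrightarrow>
     (\<forall>f \<in> Arr C. cdom C f \<in> Obj C \<and> ccod C f \<in> Obj C) \<and>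
     (\<forall>a \<in> Obj C. cid C a \<in> hom C a a) \<and>
     (\<forall>f \<in> Arr C. \<forall>g \<in> Arr C. ccod C f = cdom C g \<longrightarrow>
         comp C g f \<in> hom C (cdom C f) (ccod C g)) \<and>
     (\<forall>f \<in> Arr C. comp C f (cid C (cdom C f)) = f \<and> comp C (cid C (ccod C f)) f = f) \<and>
     (\<forall>f \<in> Arr C. \<forall>g \<in> Arr C. \<forall>h \<in> Arr C. ccod C f = cdom C g \<and> ccod C g = cdom C h \<longrightarrow>
         comp C h (comp C g f) = comp C (comp C h g) f)"

definition mono :: "('o, 'm, 'x) category_scheme \<Rightarrow> 'm \<Rightarrow> bool" where
  "mono C m \<longleftrightarrow> m \<in> Arr C \<and>
     (\<forall>g \<in> Arr C. \<forall>h \<in> Arr C. ccod C g = cdom C m \<and> ccod C h = cdom C m \<and> cdom C g = cdom C h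
        \<and> comp C m g = comp C m h \<longrightarrow> g = h)"

definition iso :: "('o, 'm, 'x) category_scheme \<Rightarrow> 'm \<Rightarrow> bool" where
  "iso C f \<longleftrightarrow> f \<in> Arr C \<and>
     (\<exists>g \<in> hom C (ccod C f) (cdom C f).
        comp C g f = cid C (cdom C f) \<and> comp C f g = cid C (ccod C f))"

definition initial :: "('o, 'm, 'x) category_scheme \<Rightarrow> 'o \<Rightarrow> bool" where
  "initial C z \<longleftrightarrow> z \<in> Obj C \<and> (\<forall>a \<in> Obj C. \<exists>!f. f \<in> hom C z a)"

definition terminal :: "('o, 'm, 'x) category_scheme \<Rightarrow> 'o \<Rightarrow> bool" where
  "terminal C t \<longleftrightarrow> t \<in> Obj C \<and> (\<forall>a \<in> Obj C. \<exists>!f. f \<in> hom C a t)"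

definition zero_obj :: "('o, 'm, 'x) category_scheme \<Rightarrow> 'o \<Rightarrow> bool" where
  "zero_obj C z \<longleftrightarrow> initial C z \<and> terminal C z"

definition pointed :: "('o, 'm, 'x) category_scheme \<Rightarrow> bool" where
  "pointed C \<longleftrightarrow> (\<exists>z. zero_obj C z)"

definition zero_mor :: "('o, 'm, 'x) category_scheme \<Rightarrow> 'o \<Rightarrow> 'o \<Rightarrow> 'm \<Rightarrow> bool" where
  "zero_mor C a b f \<longleftrightarrow> f \<in> hom C a b \<and>
     (\<exists>z g h. zero_obj C z \<and> g \<in> hom C a z \<and> h \<in> hom C z b \<and> f = comp C h g)"

definition pullback :: "('o, 'm, 'x) category_scheme \<Rightarrow> 'm \<Rightarrow> 'm \<Rightarrow> 'm \<Rightarrow> 'm \<Rightarrow> bool" where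
  "pullback C f g p1 p2 \<longleftrightarrow>
     f \<in> Arr C \<and> g \<in> Arr C \<and> ccod C f = ccod C g \<and>
     p1 \<in> Arr C \<and> p2 \<in> Arr C \<and> cdom C p1 = cdom C p2 \<and>
     ccod C p1 = cdom C f \<and> ccod C p2 = cdom C g \<and> comp C f p1 = comp C g p2 \<and>
     (\<forall>q1 \<in> Arr C. \<forall>q2 \<in> Arr C. cdom C q1 = cdom C q2 \<and>
        ccod C q1 = cdom C f \<and> ccod C q2 = cdom C g \<and> comp C f q1 = comp C g q2 \<longrightarrow>
        (\<exists>!u. u \<in> hom C (cdom C q1) (cdom C p1) \<and> comp C p1 u = q1 \<and> comp C p2 u = q2))"

definition finitely_complete :: "('o, 'm, 'x) category_scheme \<Rightarrow> bool" where
  "finitely_complete C \<longleftrightarrow> (\<exists>t. terminal C t) \<and>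
     (\<forall>f \<in> Arr C. \<forall>g \<in> Arr C. ccod C f = ccod C g \<longrightarrow> (\<exists>p1 p2. pullback C f g p1 p2))"

definition coequalizer :: "('o, 'm, 'x) category_scheme \<Rightarrow> 'm \<Rightarrow> 'm \<Rightarrow> 'm \<Rightarrow> bool" where
  "coequalizer C f g q \<longleftrightarrow>
     f \<in> Arr C \<and> g \<in> Arr C \<and> cdom C f = cdom C g \<and> ccod C f = ccod C g \<and>
     q \<in> Arr C \<and> cdom C q = ccod C f \<and> comp C q f = comp C q g \<and>
     (\<forall>r \<in> Arr C. cdom C r = ccod C f \<and> comp C r f = comp C r g \<longrightarrow>
        (\<exists>!u. u \<in> hom C (ccod C q) (ccod C r) \<and> comp C u q = r))"

definition regular_epi :: "('o, 'm, 'x) category_scheme \<Rightarrow> 'm \<Rightarrow> bool" where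
  "regular_epi C q \<longleftrightarrow> (\<exists>f g. coequalizer C f g q)"

definition normal_epi :: "('o, 'm, 'x) category_scheme \<Rightarrow> 'm \<Rightarrow> bool" where
  "normal_epi C q \<longleftrightarrow> (\<exists>k z. zero_mor C (cdom C k) (ccod C k) z \<and> coequalizer C k z q)"

definition regular_category :: "('o, 'm, 'x) category_scheme \<Rightarrow> bool" where
  "regular_category C \<longleftrightarrow> category C \<and> finitely_complete C \<and>
     (\<forall>f p1 p2. pullback C f f p1 p2 \<longrightarrow> (\<exists>q. coequalizer C p1 p2 q)) \<and>
     (\<forall>e f p1 p2. regular_epi C e \<and> pullback C f e p1 p2 \<longrightarrow> regular_epi C p1)"

definition normal_category :: "('o, 'm, 'x) category_scheme \<Rightarrow> bool" where
  "normal_category C \<longleftrightarrow> pointed C \<and> regular_category C \<and>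
     (\<forall>q. regular_epi C q \<longrightarrow> normal_epi C q)"

definition coproduct :: "('o, 'm, 'x) category_scheme \<Rightarrow> 'o \<Rightarrow> 'o \<Rightarrow> 'o \<Rightarrow> 'm \<Rightarrow> 'm \<Rightarrow> bool" where
  "coproduct C X B P i1 i2 \<longleftrightarrow> i1 \<in> hom C X P \<and> i2 \<in> hom C B P \<and>
     (\<forall>Z \<in> Obj C. \<forall>f \<in> hom C X Z. \<forall>g \<in> hom C B Z.
        (\<exists>!u. u \<in> hom C P Z \<and> comp C u i1 = f \<and> comp C u i2 = g))"

definition kernel :: "('o, 'm, 'x) category_scheme \<Rightarrow> 'm \<Rightarrow> 'm \<Rightarrow> bool" where
  "kernel C u \<kappa> \<longleftrightarrow> u \<in> Arr C \<and> \<kappa> \<in> Arr C \<and> ccod C \<kappa> = cdom C u \<and>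
     zero_mor C (cdom C \<kappa>) (ccod C u) (comp C u \<kappa>) \<and>
     (\<forall>h \<in> Arr C. ccod C h = cdom C u \<and> zero_mor C (cdom C h) (ccod C u) (comp C u h) \<longrightarrow>
        (\<exists>!v. v \<in> hom C (cdom C h) (cdom C \<kappa>) \<and> comp C \<kappa> v = h))"

definition image_of :: "('o, 'm, 'x) category_scheme \<Rightarrow> 'm \<Rightarrow> 'm \<Rightarrow> bool" where
  "image_of C h m \<longleftrightarrow> h \<in> Arr C \<and> mono C m \<and> ccod C m = ccod C h \<and>
     (\<exists>e. regular_epi C e \<and> e \<in> hom C (cdom C h) (cdom C m) \<and> comp C m e = h)"

definition zero_subobject :: "('o, 'm, 'x) category_scheme \<Rightarrow> 'o \<Rightarrow> 'm \<Rightarrow> bool" where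
  "zero_subobject C Y m \<longleftrightarrow> mono C m \<and> ccod C m = Y \<and>
     (\<exists>Z z \<phi>. zero_obj C Z \<and> z \<in> hom C Z Y \<and> iso C \<phi> \<and> \<phi> \<in> hom C (cdom C m) Z \<and>
        comp C z \<phi> = m)"

definition rel_commute :: "('o, 'm, 'x) category_scheme \<Rightarrow> 'm \<Rightarrow> 'm \<Rightarrow> 'm \<Rightarrow> 'm \<Rightarrow> bool" where
  "rel_commute C k s f g \<longleftrightarrow>
     (\<exists>\<phi>. \<phi> \<in> hom C (ccod C k) (ccod C f) \<and> comp C \<phi> k = f \<and> comp C \<phi> s = g)"

definition extremally_epic_cospan :: "('o, 'm, 'x) category_scheme \<Rightarrow> 'm \<Rightarrow> 'm \<Rightarrow> bool" where
  "extremally_epic_cospan C k s \<longleftrightarrow> k \<in> Arr C \<and> s \<in> Arr C \<and> ccod C k = ccod C s \<and>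
     (\<forall>m k' s'. mono C m \<and> ccod C m = ccod C k \<and>
        k' \<in> hom C (cdom C k) (cdom C m) \<and> s' \<in> hom C (cdom C s) (cdom C m) \<and>
        comp C m k' = k \<and> comp C m s' = s \<longrightarrow> iso C m)"

definition rel_commutator :: "('o, 'm, 'x) category_scheme \<Rightarrow> 'm \<Rightarrow> 'm \<Rightarrow> 'm \<Rightarrow> 'm \<Rightarrow> 'm \<Rightarrow> bool" where
  "rel_commutator C k s f g m \<longleftrightarrow>
     (\<exists>P i1 i2 u \<kappa> c. coproduct C (cdom C k) (cdom C s) P i1 i2 \<and>
        u \<in> hom C P (ccod C k) \<and> comp C u i1 = k \<and> comp C u i2 = s \<and>
        kernel C u \<kappa> \<and>
        c \<in> hom C P (ccod C f) \<and> comp C c i1 = f \<and> comp C c i2 = g \<and>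
        image_of C (comp C c \<kappa>) m)"

end

theory Submission
  imports Defs
begin

text \<open>The copairing \<open>u = \<langle>k,s\<rangle>\<close> has a regular image factorisation \<open>u = m\<cdot>q\<close>, and
  extremal epicness of \<open>(k,s)\<close> forces \<open>m\<close> to be an isomorphism. In a normal category \<open>q\<close> is
  the cokernel of some \<open>k'\<close>, which factors through the kernel \<open>\<kappa>\<close> of \<open>u\<close>. Hence
  \<open>\<langle>f,g\<rangle>\<close> factors through \<open>u\<close>, i.e. \<open>f\<close> and \<open>g\<close> commute relatively to \<open>(k,s)\<close>, exactly when
  \<open>\<langle>f,g\<rangle>\<cdot>\<kappa>\<close> is zero, which in turn says that its image is the zero subobject.\<close>

lemma in_hom_iff: "f \<in> hom C a b \<longleftrightarrow> f \<in> Arr C \<and> cdom C f = a \<and> ccod C f = b"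
  by (simp add: hom_def)

lemma zero_obj_obj: "zero_obj C Z \<Longrightarrow> Z \<in> Obj C"
  by (simp add: zero_obj_def initial_def)

lemma zero_obj_hom_into_unique:
  "zero_obj C Z \<Longrightarrow> a \<in> Obj C \<Longrightarrow> x \<in> hom C a Z \<Longrightarrow> y \<in> hom C a Z \<Longrightarrow> x = y"
  unfolding zero_obj_def terminal_def by blast

lemma zero_obj_hom_from_unique:
  "zero_obj C Z \<Longrightarrow> a \<in> Obj C \<Longrightarrow> x \<in> hom C Z a \<Longrightarrow> y \<in> hom C Z a \<Longrightarrow> x = y"
  unfolding zero_obj_def initial_def by blast

lemma zero_obj_hom_into_ex: "zero_obj C Z \<Longrightarrow> a \<in> Obj C \<Longrightarrow> \<exists>x. x \<in> hom C a Z"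
  unfolding zero_obj_def terminal_def by blast

lemma zero_obj_hom_from_ex: "zero_obj C Z \<Longrightarrow> a \<in> Obj C \<Longrightarrow> \<exists>x. x \<in> hom C Z a"
  unfolding zero_obj_def initial_def by blast

lemma regular_epiI: "coequalizer C f g q \<Longrightarrow> regular_epi C q"
  unfolding regular_epi_def by blast

lemma kernel_universal:
  assumes "kernel C u \<kappa>" "u \<in> hom C P A" "h \<in> hom C E P" "zero_mor C E A (comp C u h)"
  shows "\<exists>v \<in> hom C E (cdom C \<kappa>). comp C \<kappa> v = h"
proof -
  have univ: "\<forall>h \<in> Arr C. ccod C h = cdom C u \<and> zero_mor C (cdom C h) (ccod C u) (comp C u h) \<longrightarrow>
          (\<exists>!v. v \<in> hom C (cdom C h) (cdom C \<kappa>) \<and> comp C \<kappa> v = h)"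
    using assms(1) unfolding kernel_def by blast
  have h: "h \<in> Arr C" "cdom C h = E" "ccod C h = cdom C u" "ccod C u = A"
    using assms(2,3) by (simp_all add: in_hom_iff)
  have "\<exists>!v. v \<in> hom C E (cdom C \<kappa>) \<and> comp C \<kappa> v = h"
    using univ[rule_format, OF h(1)] h assms(4) by simp
  then show ?thesis
    by blast
qed

lemma coequalizer_universal:
  assumes "coequalizer C f g q" "r \<in> hom C (ccod C f) W" "comp C r f = comp C r g"
  shows "\<exists>v \<in> hom C (ccod C q) W. comp C v q = r"
proof -
  have univ: "\<forall>r \<in> Arr C. cdom C r = ccod C f \<and> comp C r f = comp C r g \<longrightarrow>
          (\<exists>!v. v \<in> hom C (ccod C q) (ccod C r) \<and> comp C v q = r)"
    using assms(1) unfolding coequalizer_def by blast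
  have r: "r \<in> Arr C" "cdom C r = ccod C f" "ccod C r = W"
    using assms(2) by (simp_all add: in_hom_iff)
  have "\<exists>!v. v \<in> hom C (ccod C q) W \<and> comp C v q = r"
    using univ[rule_format, OF r(1)] r assms(3) by simp
  then show ?thesis
    by blast
qed

lemma pullback_universal:
  assumes "pullback C f g p1 p2" "q1 \<in> hom C W (cdom C f)" "q2 \<in> hom C W (cdom C g)"
    "comp C f q1 = comp C g q2"
  shows "\<exists>v \<in> hom C W (cdom C p1). comp C p1 v = q1 \<and> comp C p2 v = q2"
proof -
  have univ: "\<forall>q1 \<in> Arr C. \<forall>q2 \<in> Arr C. cdom C q1 = cdom C q2 \<and>
        ccod C q1 = cdom C f \<and> ccod C q2 = cdom C g \<and> comp C f q1 = comp C g q2 \<longrightarrow>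
        (\<exists>!v. v \<in> hom C (cdom C q1) (cdom C p1) \<and> comp C p1 v = q1 \<and> comp C p2 v = q2)"
    using assms(1) unfolding pullback_def by blast
  have q: "q1 \<in> Arr C" "q2 \<in> Arr C" "cdom C q1 = W" "cdom C q2 = W"
    "ccod C q1 = cdom C f" "ccod C q2 = cdom C g"
    using assms(2,3) by (simp_all add: in_hom_iff)
  have "\<exists>!v. v \<in> hom C W (cdom C p1) \<and> comp C p1 v = q1 \<and> comp C p2 v = q2"
    using univ[rule_format, OF q(1,2)] q assms(4) by simp
  then show ?thesis
    by blast
qed

lemma mono_cancel:
  "mono C m \<Longrightarrow> g \<in> hom C a (cdom C m) \<Longrightarrow> h \<in> hom C a (cdom C m) \<Longrightarrow>
   comp C m g = comp C m h \<Longrightarrow> g = h"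
  unfolding mono_def in_hom_iff by auto

lemma coequalizerD:
  assumes "coequalizer C f g q"
  shows "f \<in> hom C (cdom C f) (ccod C f)" "g \<in> hom C (cdom C f) (ccod C f)"
    "q \<in> hom C (ccod C f) (ccod C q)" "comp C q f = comp C q g"
  using assms by (simp_all add: coequalizer_def in_hom_iff)

lemma coproduct_injections:
  assumes "coproduct C X B P i1 i2"
  shows "i1 \<in> hom C X P" "i2 \<in> hom C B P"
  using assms by (simp_all add: coproduct_def)

lemma kernelD:
  assumes "kernel C u \<kappa>" "u \<in> hom C P A"
  shows "\<kappa> \<in> hom C (cdom C \<kappa>) P" "zero_mor C (cdom C \<kappa>) A (comp C u \<kappa>)"
  using assms by (simp_all add: kernel_def in_hom_iff)

lemma pullback_in_hom:
  assumes "pullback C f g p1 p2" "f \<in> hom C a c" "g \<in> hom C b c"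
  shows "p1 \<in> hom C (cdom C p1) a" "p2 \<in> hom C (cdom C p1) b" "comp C f p1 = comp C g p2"
  using assms by (simp_all add: pullback_def in_hom_iff)

context
  fixes C :: "('o, 'm, 'x) category_scheme"
  assumes cat: "category C"
begin

lemma dom_in_Obj: "f \<in> hom C a b \<Longrightarrow> a \<in> Obj C"
  using cat unfolding category_def hom_def by auto

lemma cod_in_Obj: "f \<in> hom C a b \<Longrightarrow> b \<in> Obj C"
  using cat unfolding category_def hom_def by auto

lemma comp_in_hom: "f \<in> hom C a b \<Longrightarrow> g \<in> hom C b c \<Longrightarrow> comp C g f \<in> hom C a c"
  using cat unfolding category_def hom_def by auto

lemma comp_assoc:
  "f \<in> hom C a b \<Longrightarrow> g \<in> hom C b c \<Longrightarrow> h \<in> hom C c d \<Longrightarrow>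
   comp C h (comp C g f) = comp C (comp C h g) f"
  using cat unfolding category_def hom_def by auto

lemma id_in_hom: "a \<in> Obj C \<Longrightarrow> cid C a \<in> hom C a a"
  using cat unfolding category_def by auto

lemma comp_id_right: "f \<in> hom C a b \<Longrightarrow> comp C f (cid C a) = f"
  using cat unfolding category_def hom_def by auto

lemma regular_epi_cancel:
  assumes "regular_epi C q" "a \<in> hom C (ccod C q) W" "b \<in> hom C (ccod C q) W"
    "comp C a q = comp C b q"
  shows "a = b"
proof -
  obtain f g where co: "coequalizer C f g q"
    using assms(1) unfolding regular_epi_def by blast
  note fh = coequalizerD(1)[OF co] and gh = coequalizerD(2)[OF co]
    and qh = coequalizerD(3)[OF co] and qfg = coequalizerD(4)[OF co]
  have aq: "comp C a q \<in> hom C (ccod C f) W"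
    using comp_in_hom[OF qh assms(2)] .
  have univ: "\<forall>r \<in> Arr C. cdom C r = ccod C f \<and> comp C r f = comp C r g \<longrightarrow>
          (\<exists>!v. v \<in> hom C (ccod C q) (ccod C r) \<and> comp C v q = r)"
    using co unfolding coequalizer_def by blast
  have "comp C (comp C a q) f = comp C (comp C a q) g"
    using comp_assoc[OF fh qh assms(2)] comp_assoc[OF gh qh assms(2)] qfg by simp
  moreover have aq': "comp C a q \<in> Arr C" "cdom C (comp C a q) = ccod C f" "ccod C (comp C a q) = W"
    using aq by (simp_all add: in_hom_iff)
  ultimately have "\<exists>!v. v \<in> hom C (ccod C q) W \<and> comp C v q = comp C a q"
    using univ[rule_format, OF aq'(1)] by simp
  then show ?thesis
    using assms(2-4) by (metis (no_types, lifting))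
qed

lemma coproduct_arrow_unique:
  assumes "coproduct C X B P i1 i2" "a \<in> hom C P Z" "b \<in> hom C P Z"
    "comp C a i1 = comp C b i1" "comp C a i2 = comp C b i2"
  shows "a = b"
proof -
  note i = coproduct_injections[OF assms(1)]
  have univ: "\<forall>Z \<in> Obj C. \<forall>f \<in> hom C X Z. \<forall>g \<in> hom C B Z.
          (\<exists>!v. v \<in> hom C P Z \<and> comp C v i1 = f \<and> comp C v i2 = g)"
    using assms(1) unfolding coproduct_def by blast
  have "\<exists>!v. v \<in> hom C P Z \<and> comp C v i1 = comp C a i1 \<and> comp C v i2 = comp C a i2"
    using univ[rule_format, OF cod_in_Obj[OF assms(2)] comp_in_hom[OF i(1) assms(2)]
        comp_in_hom[OF i(2) assms(2)]] .
  then show ?thesis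
    using assms(2-) by (metis (no_types, lifting))
qed

lemma zero_mor_unique:
  assumes "zero_mor C a b f" "zero_mor C a b f'"
  shows "f = f'"
proof -
  obtain Z g h where Z: "zero_obj C Z" "g \<in> hom C a Z" "h \<in> hom C Z b" "f = comp C h g"
    using assms(1) unfolding zero_mor_def by blast
  obtain Z' g' h' where Z': "zero_obj C Z'" "g' \<in> hom C a Z'" "h' \<in> hom C Z' b" "f' = comp C h' g'"
    using assms(2) unfolding zero_mor_def by blast
  obtain t where t: "t \<in> hom C Z Z'"
    using zero_obj_hom_from_ex[OF Z(1) zero_obj_obj[OF Z'(1)]] by blast
  have "g' = comp C t g"
    using zero_obj_hom_into_unique[OF Z'(1) dom_in_Obj[OF Z(2)] Z'(2) comp_in_hom[OF Z(2) t]] .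
  moreover have "h = comp C h' t"
    using zero_obj_hom_from_unique[OF Z(1) cod_in_Obj[OF Z(3)] Z(3) comp_in_hom[OF t Z'(3)]] .
  ultimately show ?thesis
    using Z(4) Z'(4) comp_assoc[OF Z(2) t Z'(3)] by simp
qed

lemma zero_mor_comp_right:
  assumes "zero_mor C a b f" "g \<in> hom C a' a"
  shows "zero_mor C a' b (comp C f g)"
proof -
  obtain Z x h where Z: "zero_obj C Z" "x \<in> hom C a Z" "h \<in> hom C Z b" "f = comp C h x"
    using assms(1) unfolding zero_mor_def by blast
  have "comp C f g = comp C h (comp C x g)"
    using comp_assoc[OF assms(2) Z(2,3)] Z(4) by simp
  moreover have "comp C x g \<in> hom C a' Z"
    using comp_in_hom[OF assms(2) Z(2)] .
  moreover have "f \<in> hom C a b"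
    using assms(1) unfolding zero_mor_def by blast
  ultimately show ?thesis
    unfolding zero_mor_def using Z(1,3) comp_in_hom[OF assms(2)] by blast
qed

lemma zero_mor_comp_left:
  assumes "zero_mor C a b f" "h' \<in> hom C b b'"
  shows "zero_mor C a b' (comp C h' f)"
proof -
  obtain Z x h where Z: "zero_obj C Z" "x \<in> hom C a Z" "h \<in> hom C Z b" "f = comp C h x"
    using assms(1) unfolding zero_mor_def by blast
  have "comp C h' f = comp C (comp C h' h) x"
    using comp_assoc[OF Z(2,3) assms(2)] Z(4) by simp
  moreover have "comp C h' h \<in> hom C Z b'"
    using comp_in_hom[OF Z(3) assms(2)] .
  moreover have "f \<in> hom C a b"
    using assms(1) unfolding zero_mor_def by blast
  ultimately show ?thesis
    unfolding zero_mor_def using Z(1,2) comp_in_hom[OF _ assms(2)] by blast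
qed

lemma iso_extend:
  assumes "iso C m" "m \<in> hom C Q A" "\<psi> \<in> hom C Q Y"
  shows "\<exists>\<phi> \<in> hom C A Y. comp C \<phi> m = \<psi>"
proof -
  obtain m' where "m' \<in> hom C (ccod C m) (cdom C m)" "comp C m' m = cid C (cdom C m)"
    using assms(1) unfolding iso_def by blast
  then have m': "m' \<in> hom C A Q" "comp C m' m = cid C Q"
    using assms(2) by (simp_all add: in_hom_iff)
  have "comp C (comp C \<psi> m') m = \<psi>"
    using comp_assoc[OF assms(2) m'(1) assms(3)] m'(2) comp_id_right[OF assms(3)] by simp
  then show ?thesis
    using comp_in_hom[OF m'(1) assms(3)] by blast
qed

lemma rel_commute_iff_factors_through_copairing:
  assumes "coproduct C X B P i1 i2"
    and "u \<in> hom C P A" "comp C u i1 = k" "comp C u i2 = s"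
    and "c \<in> hom C P Y" "comp C c i1 = f" "comp C c i2 = g"
  shows "rel_commute C k s f g \<longleftrightarrow> (\<exists>\<phi> \<in> hom C A Y. comp C \<phi> u = c)"
proof -
  note i = coproduct_injections[OF assms(1)]
  have kf: "ccod C k = A" "ccod C f = Y"
    using comp_in_hom[OF i(1) assms(2)] comp_in_hom[OF i(1) assms(5)] assms(3,6)
    by (simp_all add: in_hom_iff)
  show ?thesis
  proof
    assume "rel_commute C k s f g"
    then obtain \<phi> where \<phi>: "\<phi> \<in> hom C A Y" "comp C \<phi> k = f" "comp C \<phi> s = g"
      unfolding rel_commute_def kf by blast
    have "comp C \<phi> u = c"
      using coproduct_arrow_unique[OF assms(1) comp_in_hom[OF assms(2) \<phi>(1)] assms(5)]
        comp_assoc[OF i(1) assms(2) \<phi>(1)] comp_assoc[OF i(2) assms(2) \<phi>(1)] assms(3-) \<phi>(2,3)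
      by simp
    then show "\<exists>\<phi> \<in> hom C A Y. comp C \<phi> u = c"
      using \<phi>(1) by blast
  next
    assume "\<exists>\<phi> \<in> hom C A Y. comp C \<phi> u = c"
    then obtain \<phi> where \<phi>: "\<phi> \<in> hom C A Y" "comp C \<phi> u = c"
      by blast
    have "comp C \<phi> k = f" "comp C \<phi> s = g"
      using comp_assoc[OF i(1) assms(2) \<phi>(1)] comp_assoc[OF i(2) assms(2) \<phi>(1)] \<phi>(2) assms(3-)
      by simp_all
    then show "rel_commute C k s f g"
      unfolding rel_commute_def kf using \<phi>(1) by blast
  qed
qed

lemma mono_through_zero_obj_iso:
  assumes "mono C m" "m \<in> hom C M Y" "zero_obj C Z" "\<phi> \<in> hom C M Z" "z \<in> hom C Z Y"
    "comp C z \<phi> = m"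
  shows "iso C \<phi>"
proof -
  note Zobj = zero_obj_obj[OF assms(3)]
  obtain \<psi> where \<psi>: "\<psi> \<in> hom C Z M"
    using zero_obj_hom_from_ex[OF assms(3) dom_in_Obj[OF assms(2)]] by blast
  have "comp C \<phi> \<psi> = cid C Z"
    using zero_obj_hom_into_unique[OF assms(3) Zobj comp_in_hom[OF \<psi> assms(4)] id_in_hom[OF Zobj]] .
  moreover have "comp C \<psi> \<phi> = cid C M"
  proof -
    have "comp C m \<psi> = z"
      using zero_obj_hom_from_unique[OF assms(3) cod_in_Obj[OF assms(5)] comp_in_hom[OF \<psi> assms(2)]
          assms(5)] .
    then have "comp C m (comp C \<psi> \<phi>) = comp C m (cid C M)"
      using comp_assoc[OF assms(4) \<psi> assms(2)] assms(6) comp_id_right[OF assms(2)] by simp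
    then show ?thesis
      using mono_cancel[OF assms(1)] comp_in_hom[OF assms(4) \<psi>] id_in_hom[OF dom_in_Obj[OF assms(2)]]
        assms(2) by (simp add: in_hom_iff)
  qed
  ultimately show ?thesis
    unfolding iso_def using assms(4) \<psi> by (auto simp: in_hom_iff)
qed

lemma image_of_zero_subobject_iff:
  assumes "image_of C h m" "h \<in> hom C D Y"
  shows "zero_subobject C Y m \<longleftrightarrow> zero_mor C D Y h"
proof -
  obtain e where e: "regular_epi C e" "e \<in> hom C D (cdom C m)" "comp C m e = h"
    using assms unfolding image_of_def in_hom_iff by auto
  have mono: "mono C m" and mh: "m \<in> hom C (cdom C m) Y"
    using assms unfolding image_of_def mono_def in_hom_iff by auto
  have ccod_e: "ccod C e = cdom C m"
    using e(2) by (simp add: in_hom_iff)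
  show ?thesis
  proof
    assume "zero_subobject C Y m"
    then obtain Z z \<phi> where Z: "zero_obj C Z" "z \<in> hom C Z Y" "\<phi> \<in> hom C (cdom C m) Z"
      "comp C z \<phi> = m"
      unfolding zero_subobject_def by blast
    have "h = comp C z (comp C \<phi> e)"
      using comp_assoc[OF e(2) Z(3,2)] Z(4) e(3) by simp
    then show "zero_mor C D Y h"
      unfolding zero_mor_def using Z(1,2) comp_in_hom[OF e(2) Z(3)] assms(2) by blast
  next
    assume "zero_mor C D Y h"
    then obtain Z g0 z where Z: "zero_obj C Z" "g0 \<in> hom C D Z" "z \<in> hom C Z Y" "h = comp C z g0"
      unfolding zero_mor_def by blast
    obtain \<phi> where \<phi>: "\<phi> \<in> hom C (cdom C m) Z"
      using zero_obj_hom_into_ex[OF Z(1) cod_in_Obj[OF e(2)]] by blast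
    have "comp C \<phi> e = g0"
      using zero_obj_hom_into_unique[OF Z(1) dom_in_Obj[OF e(2)] comp_in_hom[OF e(2) \<phi>] Z(2)] .
    then have "comp C (comp C z \<phi>) e = comp C m e"
      using comp_assoc[OF e(2) \<phi> Z(3)] Z(4) e(3) by simp
    then have z\<phi>: "comp C z \<phi> = m"
      using regular_epi_cancel[OF e(1)] comp_in_hom[OF \<phi> Z(3)] mh ccod_e by simp
    then show "zero_subobject C Y m"
      unfolding zero_subobject_def
      using mono mh Z(1,3) \<phi> mono_through_zero_obj_iso[OF mono mh Z(1) \<phi> Z(3) z\<phi>]
      by (auto simp: in_hom_iff)
  qed
qed

lemma factors_through_normal_epi:
  assumes "normal_epi C q" "q \<in> hom C P Q"
    and "u \<in> hom C P A" "m \<in> hom C Q A" "comp C m q = u" "kernel C u \<kappa>"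
    and "c \<in> hom C P Y" "zero_mor C (cdom C \<kappa>) Y (comp C c \<kappa>)"
  shows "\<exists>\<psi> \<in> hom C Q Y. comp C \<psi> q = c"
proof -
  obtain k' z where z: "zero_mor C (cdom C k') (ccod C k') z" and co: "coequalizer C k' z q"
    using assms(1) unfolding normal_epi_def by blast
  define E where "E = cdom C k'"
  have k': "k' \<in> hom C E P" and z': "zero_mor C E P z"
    using coequalizerD(1,3)[OF co] z assms(2) unfolding E_def in_hom_iff by auto
  have zh: "z \<in> hom C E P"
    using z' unfolding zero_mor_def by blast
  have "comp C u k' = comp C u z"
    using coequalizerD(4)[OF co] comp_assoc[OF k' assms(2,4)] comp_assoc[OF zh assms(2,4)] assms(5)
    by simp
  then have "zero_mor C E A (comp C u k')"
    using zero_mor_comp_left[OF z' assms(3)] by simp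
  then obtain v where v: "v \<in> hom C E (cdom C \<kappa>)" "comp C \<kappa> v = k'"
    using kernel_universal[OF assms(6,3) k'] by blast
  note \<kappa> = kernelD(1)[OF assms(6,3)]
  have "zero_mor C E Y (comp C c k')"
    using zero_mor_comp_right[OF assms(8) v(1)] comp_assoc[OF v(1) \<kappa> assms(7)] v(2) by simp
  then have "comp C c k' = comp C c z"
    using zero_mor_unique[OF _ zero_mor_comp_left[OF z' assms(7)]] by blast
  then show ?thesis
    using coequalizer_universal[OF co] assms(2,7) k' by (auto simp: in_hom_iff)
qed


lemma kernel_pair_eq_imp_mono:
  assumes "pullback C m m r1 r2" "r1 = r2"
  shows "mono C m"
  unfolding mono_def
proof (intro conjI ballI impI)
  show "m \<in> Arr C"
    using assms(1) unfolding pullback_def by blast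
  fix g h
  assume "g \<in> Arr C" "h \<in> Arr C"
    "ccod C g = cdom C m \<and> ccod C h = cdom C m \<and> cdom C g = cdom C h \<and> comp C m g = comp C m h"
  then obtain v where "comp C r1 v = g" "comp C r2 v = h"
    using pullback_universal[OF assms(1), of g "cdom C g" h] by (auto simp: in_hom_iff)
  then show "g = h"
    using assms(2) by simp
qed

lemma extremally_epic_copairing_mono_factor_iso:
  assumes "coproduct C X B P i1 i2" "u \<in> hom C P A"
    and "extremally_epic_cospan C (comp C u i1) (comp C u i2)"
    and "mono C m" "m \<in> hom C Q A" "q \<in> hom C P Q" "comp C m q = u"
  shows "iso C m"
proof -
  note i = coproduct_injections[OF assms(1)]
  have extremal: "\<forall>m k' s'. mono C m \<and> ccod C m = A \<and>
      k' \<in> hom C X (cdom C m) \<and> s' \<in> hom C B (cdom C m) \<and>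
      comp C m k' = comp C u i1 \<and> comp C m s' = comp C u i2 \<longrightarrow> iso C m"
    using assms(3) comp_in_hom[OF i(1) assms(2)] comp_in_hom[OF i(2) assms(2)]
    unfolding extremally_epic_cospan_def in_hom_iff by auto
  show ?thesis
    using extremal[rule_format, of m "comp C q i1" "comp C q i2"] assms(4-7)
      comp_in_hom[OF i(1) assms(6)] comp_in_hom[OF i(2) assms(6)]
      comp_assoc[OF i(1) assms(6,5)] comp_assoc[OF i(2) assms(6,5)]
    by (auto simp: in_hom_iff)
qed
end

context
  fixes C :: "('o, 'm, 'x) category_scheme"
  assumes reg: "regular_category C"
begin

lemma regular_category_category: "category C"
  using reg unfolding regular_category_def by blast

lemma pullback_exists:
  assumes "f \<in> hom C a c" "g \<in> hom C b c"
  shows "\<exists>p1 p2. pullback C f g p1 p2"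
proof -
  have "\<forall>f \<in> Arr C. \<forall>g \<in> Arr C. ccod C f = ccod C g \<longrightarrow> (\<exists>p1 p2. pullback C f g p1 p2)"
    using reg unfolding regular_category_def finitely_complete_def by blast
  moreover have "f \<in> Arr C" "g \<in> Arr C" "ccod C f = ccod C g"
    using assms by (simp_all add: in_hom_iff)
  ultimately show ?thesis
    by blast
qed

lemma regular_epi_pullback_stable: "regular_epi C e \<Longrightarrow> pullback C f e p1 p2 \<Longrightarrow> regular_epi C p1"
  using reg unfolding regular_category_def by blast

lemma regular_epi_lift_pair:
  assumes "regular_epi C q" "q \<in> hom C P Q" "r1 \<in> hom C K Q" "r2 \<in> hom C K Q"
  obtains M e x1 x2 where "e \<in> hom C M K" "x1 \<in> hom C M P" "x2 \<in> hom C M P"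
    "comp C r1 e = comp C q x1" "comp C r2 e = comp C q x2"
    "\<And>a b. a \<in> hom C K Q \<Longrightarrow> b \<in> hom C K Q \<Longrightarrow> comp C a e = comp C b e \<Longrightarrow> a = b"
proof -
  note cat = regular_category_category
  obtain a1 x1 where pa: "pullback C r1 q a1 x1"
    using pullback_exists[OF assms(3,2)] by blast
  define L where "L = cdom C a1"
  have a1: "a1 \<in> hom C L K" and x1: "x1 \<in> hom C L P" and ra: "comp C r1 a1 = comp C q x1"
    using pullback_in_hom[OF pa assms(3,2)] unfolding L_def by auto
  have r2a: "comp C r2 a1 \<in> hom C L Q"
    using comp_in_hom[OF cat a1 assms(4)] .
  obtain b1 x2 where pb: "pullback C (comp C r2 a1) q b1 x2"
    using pullback_exists[OF r2a assms(2)] by blast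
  define M where "M = cdom C b1"
  have b1: "b1 \<in> hom C M L" and x2: "x2 \<in> hom C M P" and rb: "comp C (comp C r2 a1) b1 = comp C q x2"
    using pullback_in_hom[OF pb r2a assms(2)] unfolding M_def by auto
  note a1_cancel = regular_epi_cancel[OF cat regular_epi_pullback_stable[OF assms(1) pa]]
  note b1_cancel = regular_epi_cancel[OF cat regular_epi_pullback_stable[OF assms(1) pb]]
  show ?thesis
  proof (rule that[of "comp C a1 b1" M "comp C x1 b1" x2])
    show "comp C r1 (comp C a1 b1) = comp C q (comp C x1 b1)"
      using comp_assoc[OF cat b1 a1 assms(3)] comp_assoc[OF cat b1 x1 assms(2)] ra by simp
    show "comp C r2 (comp C a1 b1) = comp C q x2"
      using comp_assoc[OF cat b1 a1 assms(4)] rb by simp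
  next
    fix a b
    assume ab: "a \<in> hom C K Q" "b \<in> hom C K Q" "comp C a (comp C a1 b1) = comp C b (comp C a1 b1)"
    then have "comp C a a1 = comp C b a1"
      using b1_cancel comp_in_hom[OF cat a1] comp_assoc[OF cat b1 a1] b1 by (simp add: in_hom_iff)
    then show "a = b"
      using a1_cancel ab(1,2) a1 by (simp add: in_hom_iff)
  qed (use comp_in_hom[OF cat b1 a1] comp_in_hom[OF cat b1 x1] x2 in auto)
qed

text \<open>Lifting the kernel pair \<open>(r1, r2)\<close> of \<open>m\<close> along \<open>q\<close> lands in the kernel pair of \<open>u\<close>,
  which \<open>q\<close> coequalises; hence \<open>r1 = r2\<close>.\<close>

lemma coequalizer_kernel_pair_factor_mono:
  assumes pb: "pullback C u u p1 p2" and co: "coequalizer C p1 p2 q"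
    and u: "u \<in> hom C P A" and m: "m \<in> hom C (ccod C q) A" and mq: "comp C m q = u"
  shows "mono C m"
proof -
  note cat = regular_category_category
  define Q where "Q = ccod C q"
  have p1: "p1 \<in> hom C (cdom C p1) P" and p2: "p2 \<in> hom C (cdom C p1) P"
    using pullback_in_hom[OF pb u u] by auto
  have q: "q \<in> hom C P Q" and qp: "comp C q p1 = comp C q p2"
    using coequalizerD(3,4)[OF co] p1 unfolding Q_def in_hom_iff by auto
  have m': "m \<in> hom C Q A"
    using m unfolding Q_def .
  obtain r1 r2 where pr: "pullback C m m r1 r2"
    using pullback_exists[OF m' m'] by blast
  define K where "K = cdom C r1"
  have r1: "r1 \<in> hom C K Q" and r2: "r2 \<in> hom C K Q" and mr: "comp C m r1 = comp C m r2"
    using pullback_in_hom[OF pr m' m'] unfolding K_def by auto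
  obtain M e x1 x2 where e: "e \<in> hom C M K" and x: "x1 \<in> hom C M P" "x2 \<in> hom C M P"
    and rx: "comp C r1 e = comp C q x1" "comp C r2 e = comp C q x2"
    and e_cancel: "\<And>a b. a \<in> hom C K Q \<Longrightarrow> b \<in> hom C K Q \<Longrightarrow> comp C a e = comp C b e \<Longrightarrow> a = b"
    using regular_epi_lift_pair[OF regular_epiI[OF co] q r1 r2] by metis
  have "comp C u x1 = comp C (comp C m r1) e"
    using mq comp_assoc[OF cat x(1) q m'] comp_assoc[OF cat e r1 m'] rx(1) by simp
  also have "\<dots> = comp C u x2"
    using mr mq comp_assoc[OF cat x(2) q m'] comp_assoc[OF cat e r2 m'] rx(2) by simp
  finally obtain w where w: "w \<in> hom C M (cdom C p1)" "comp C p1 w = x1" "comp C p2 w = x2"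
    using pullback_universal[OF pb] x u by (fastforce simp: in_hom_iff)
  have "comp C r1 e = comp C r2 e"
    using rx qp w comp_assoc[OF cat w(1) p1 q] comp_assoc[OF cat w(1) p2 q] by simp
  then show ?thesis
    using kernel_pair_eq_imp_mono[OF cat pr] e_cancel[OF r1 r2] by simp
qed

lemma regular_image_factorisation:
  assumes "u \<in> hom C P A"
  obtains Q q m where "regular_epi C q" "q \<in> hom C P Q" "mono C m" "m \<in> hom C Q A" "comp C m q = u"
proof -
  obtain p1 p2 where pb: "pullback C u u p1 p2"
    using pullback_exists[OF assms assms] by blast
  have p: "p1 \<in> hom C (cdom C p1) P" "p2 \<in> hom C (cdom C p1) P" "comp C u p1 = comp C u p2"
    using pullback_in_hom[OF pb assms assms] by auto
  obtain q where co: "coequalizer C p1 p2 q"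
    using reg pb unfolding regular_category_def by blast
  have q: "q \<in> hom C P (ccod C q)"
    using coequalizerD(3)[OF co] p by (simp add: in_hom_iff)
  obtain m where m: "m \<in> hom C (ccod C q) A" "comp C m q = u"
    using coequalizer_universal[OF co] p assms by (fastforce simp: in_hom_iff)
  show ?thesis
    using that[OF regular_epiI[OF co] q coequalizer_kernel_pair_factor_mono[OF pb co assms m]] m .
qed

end

lemma factors_through_copairing_iff_kernel_zero:
  assumes "normal_category C" "coproduct C X B P i1 i2"
    and "u \<in> hom C P A" "extremally_epic_cospan C (comp C u i1) (comp C u i2)" "kernel C u \<kappa>"
    and "c \<in> hom C P Y"
  shows "(\<exists>\<phi> \<in> hom C A Y. comp C \<phi> u = c) \<longleftrightarrow> zero_mor C (cdom C \<kappa>) Y (comp C c \<kappa>)"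
proof -
  have reg: "regular_category C"
    using assms(1) unfolding normal_category_def by blast
  note cat = regular_category_category[OF reg]
  note \<kappa> = kernelD(1)[OF assms(5,3)] and u\<kappa> = kernelD(2)[OF assms(5,3)]
  show ?thesis
  proof
    assume "\<exists>\<phi> \<in> hom C A Y. comp C \<phi> u = c"
    then show "zero_mor C (cdom C \<kappa>) Y (comp C c \<kappa>)"
      using zero_mor_comp_left[OF cat u\<kappa>] comp_assoc[OF cat \<kappa> assms(3)] by auto
  next
    assume c\<kappa>: "zero_mor C (cdom C \<kappa>) Y (comp C c \<kappa>)"
    obtain Q q m where q: "regular_epi C q" "q \<in> hom C P Q"
      and m: "mono C m" "m \<in> hom C Q A" "comp C m q = u"
      using regular_image_factorisation[OF reg assms(3)] by blast
    have "iso C m"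
      using extremally_epic_copairing_mono_factor_iso[OF cat assms(2-4) m(1,2) q(2) m(3)] .
    moreover obtain \<psi> where "\<psi> \<in> hom C Q Y" "comp C \<psi> q = c"
      using factors_through_normal_epi[OF cat _ q(2) assms(3) m(2,3) assms(5,6) c\<kappa>]
        q(1) assms(1) unfolding normal_category_def by blast
    ultimately obtain \<phi> where "\<phi> \<in> hom C A Y" "comp C \<phi> m = \<psi>"
      using iso_extend[OF cat _ m(2)] by blast
    then show "\<exists>\<phi> \<in> hom C A Y. comp C \<phi> u = c"
      using comp_assoc[OF cat q(2) m(2)] m(3) \<open>comp C \<psi> q = c\<close> by auto
  qed
qed

theorem mainTheorem4:
  fixes C :: "('o, 'm, 'x) category_scheme"
    and X A B Y :: 'o and k s f g m :: 'm
  assumes "normal_category C"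
    and "k \<in> hom C X A" and "s \<in> hom C B A"
    and "extremally_epic_cospan C k s"
    and "f \<in> hom C X Y" and "g \<in> hom C B Y"
    and "rel_commutator C k s f g m"
  shows "rel_commute C k s f g \<longleftrightarrow> zero_subobject C Y m"
proof -
  have cat: "category C"
    using assms(1) regular_category_category unfolding normal_category_def by blast
  obtain P i1 i2 u \<kappa> c where cop: "coproduct C X B P i1 i2"
    and u: "u \<in> hom C P A" "comp C u i1 = k" "comp C u i2 = s" and ker: "kernel C u \<kappa>"
    and c: "c \<in> hom C P Y" "comp C c i1 = f" "comp C c i2 = g"
    and img: "image_of C (comp C c \<kappa>) m"
  proof -
    have ends: "cdom C k = X" "cdom C s = B" "ccod C k = A" "ccod C f = Y"
      using assms(2,3,5) by (simp_all add: in_hom_iff)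
    show ?thesis
      using assms(7) that unfolding rel_commutator_def ends by blast
  qed
  note \<kappa> = kernelD(1)[OF ker u(1)]
  have "rel_commute C k s f g \<longleftrightarrow> (\<exists>\<phi> \<in> hom C A Y. comp C \<phi> u = c)"
    using rel_commute_iff_factors_through_copairing[OF cat cop u c] .
  also have "\<dots> \<longleftrightarrow> zero_mor C (cdom C \<kappa>) Y (comp C c \<kappa>)"
    using factors_through_copairing_iff_kernel_zero[OF assms(1) cop u(1) _ ker c(1)] assms(4) u(2,3)
    by simp
  also have "\<dots> \<longleftrightarrow> zero_subobject C Y m"
    using image_of_zero_subobject_iff[OF cat img comp_in_hom[OF cat \<kappa> c(1)]] by simp
  finally show ?thesis .
qed

end
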